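(* Let $T=(V,E)$ be a tree with $\mathrm{pthin}(T)=2$, and let $\sigma$ be an ordering of $V$ and $S=\{V^0,V^1\}$ a partition of $V$ that are strongly consistent. Let $v_1,v_2,v_3$ be vertices with $v_1<v_2<v_3$ and $\deg(v_2)=3$. Then either the unique simple path from $v_1$ to $v_3$ passes through $v_2$, or some vertex of that path is adjacent to $v_2$.
   Context: For a graph $G=(V,E)$, a linear ordering $<$ of $V$ and a partition of $V$ into classes are called strongly consistent if for every triple $r<s<t$ of vertices with $rt\in E$: if $r$ and $s$ belong to the same class then $st\in E$, and if $s$ and $t$ belong to the same class then $rs\in E$. The proper thinness $\mathrm{pthin}(G)$ is the minimum $k$ such that some ordering and some partition into $k$ classes are strongly consistent. *)

theory Defs
  imports Main "HOL-Library.Disjoint_Sets"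
begin

definition graph :: "'a set \<Rightarrow> ('a \<Rightarrow> 'a \<Rightarrow> bool) \<Rightarrow> bool" where
  "graph V E \<longleftrightarrow> finite V \<and> (\<forall>x y. E x y \<longrightarrow> x \<in> V \<and> y \<in> V \<and> x \<noteq> y \<and> E y x)"

definition degree :: "'a set \<Rightarrow> ('a \<Rightarrow> 'a \<Rightarrow> bool) \<Rightarrow> 'a \<Rightarrow> nat" where
  "degree V E v = card {u \<in> V. E v u}"

definition simple_path :: "'a set \<Rightarrow> ('a \<Rightarrow> 'a \<Rightarrow> bool) \<Rightarrow> 'a list \<Rightarrow> bool" where
  "simple_path V E p \<longleftrightarrow> p \<noteq> [] \<and> distinct p \<and> set p \<subseteq> V \<and>
     (\<forall>i. Suc i < length p \<longrightarrow> E (p ! i) (p ! Suc i))"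

definition connected_graph :: "'a set \<Rightarrow> ('a \<Rightarrow> 'a \<Rightarrow> bool) \<Rightarrow> bool" where
  "connected_graph V E \<longleftrightarrow> V \<noteq> {} \<and>
     (\<forall>x\<in>V. \<forall>y\<in>V. \<exists>p. simple_path V E p \<and> hd p = x \<and> last p = y)"

definition acyclic_graph :: "'a set \<Rightarrow> ('a \<Rightarrow> 'a \<Rightarrow> bool) \<Rightarrow> bool" where
  "acyclic_graph V E \<longleftrightarrow>
     \<not> (\<exists>p. simple_path V E p \<and> length p \<ge> 3 \<and> E (last p) (hd p))"

definition tree :: "'a set \<Rightarrow> ('a \<Rightarrow> 'a \<Rightarrow> bool) \<Rightarrow> bool" where
  "tree V E \<longleftrightarrow> graph V E \<and> connected_graph V E \<and> acyclic_graph V E"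

definition vertex_ordering :: "'a set \<Rightarrow> 'a rel \<Rightarrow> bool" where
  "vertex_ordering V ord \<longleftrightarrow> strict_linear_order_on V ord \<and> ord \<subseteq> V \<times> V"

definition strongly_consistent ::
  "'a set \<Rightarrow> ('a \<Rightarrow> 'a \<Rightarrow> bool) \<Rightarrow> 'a rel \<Rightarrow> 'a set set \<Rightarrow> bool" where
  "strongly_consistent V E ord P \<longleftrightarrow>
     (\<forall>r\<in>V. \<forall>s\<in>V. \<forall>t\<in>V. (r, s) \<in> ord \<and> (s, t) \<in> ord \<and> E r t \<longrightarrow>
        ((\<exists>X\<in>P. r \<in> X \<and> s \<in> X) \<longrightarrow> E s t) \<and>
        ((\<exists>X\<in>P. s \<in> X \<and> t \<in> X) \<longrightarrow> E r s))"

definition pthin :: "'a set \<Rightarrow> ('a \<Rightarrow> 'a \<Rightarrow> bool) \<Rightarrow> nat" where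
  "pthin V E = (LEAST k. \<exists>ord P. vertex_ordering V ord \<and> partition_on V P \<and>
       card P = k \<and> strongly_consistent V E ord P)"

end

theory Submission
  imports Defs
begin

text \<open>
  Walking along the path from \<open>v\<^sub>1\<close> to \<open>v\<^sub>3\<close> we cross \<open>v\<^sub>2\<close> in the ordering: some edge \<open>ab\<close> of
  the path has \<open>a < v\<^sub>2 < b\<close>. If neither \<open>a\<close> nor \<open>b\<close> is adjacent to \<open>v\<^sub>2\<close>, strong consistency
  puts both in the class not containing \<open>v\<^sub>2\<close>, and then, comparing each neighbour \<open>w\<close> of \<open>v\<^sub>2\<close>
  with \<open>a\<close> and \<open>b\<close> and using that a tree has no triangles, every neighbour of \<open>v\<^sub>2\<close> lies in
  the class of \<open>v\<^sub>2\<close>. Two neighbours on the same side of \<open>v\<^sub>2\<close> would then be adjacent, again a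
  triangle; so \<open>v\<^sub>2\<close> has at most one neighbour on each side, contradicting \<open>deg(v\<^sub>2) = 3\<close>.
\<close>

lemma list_crossing_step:
  assumes "xs \<noteq> []" "P (hd xs)" "\<not> P (last xs)"
  shows "\<exists>i. Suc i < length xs \<and> P (xs ! i) \<and> \<not> P (xs ! Suc i)"
  using assms
proof (induction xs)
  case Nil
  then show ?case by simp
next
  case (Cons x xs)
  show ?case
  proof (cases "xs = [] \<or> \<not> P (hd xs)")
    case True
    with Cons.prems show ?thesis
      by (intro exI[of _ 0]) (auto simp: hd_conv_nth split: if_splits)
  next
    case False
    with Cons obtain i where "Suc i < length xs" "P (xs ! i)" "\<not> P (xs ! Suc i)"
      by auto
    then show ?thesis by (intro exI[of _ "Suc i"]) auto
  qed
qed

lemma acyclic_graph_acyclic: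
  assumes "graph V E" "acyclic_graph V E" "E x y" "E y z" "E z x"
  shows False
proof -
  have "x \<in> V" "y \<in> V" "z \<in> V" "x \<noteq> y" "y \<noteq> z" "z \<noteq> x"
    using assms(1,3-5) unfolding graph_def by blast+
  with assms(3,4) have "simple_path V E [x, y, z]"
    unfolding simple_path_def by (auto simp: less_Suc_eq nth_Cons')
  with assms(2,5) show False
    unfolding acyclic_graph_def by force
qed

locale strongly_consistent_2_layout =
  fixes V :: "'a set" and E :: "'a \<Rightarrow> 'a \<Rightarrow> bool" and \<sigma> :: "'a rel" and A B :: "'a set"
  assumes graph: "graph V E"
    and ordering: "vertex_ordering V \<sigma>"
    and partition: "partition_on V {A, B}"
    and consistent: "strongly_consistent V E \<sigma> {A, B}"
begin

lemma adjacent_in_V: "E x y \<Longrightarrow> x \<in> V \<and> y \<in> V"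
  and adjacent_sym: "E x y \<Longrightarrow> E y x"
  and not_adjacent_self: "\<not> E x x"
  using graph unfolding graph_def by blast+

lemma ordering_total: "x \<in> V \<Longrightarrow> y \<in> V \<Longrightarrow> x \<noteq> y \<Longrightarrow> (x, y) \<in> \<sigma> \<or> (y, x) \<in> \<sigma>"
  and ordering_trans: "(x, y) \<in> \<sigma> \<Longrightarrow> (y, z) \<in> \<sigma> \<Longrightarrow> (x, z) \<in> \<sigma>"
  and ordering_irrefl: "(x, x) \<notin> \<sigma>"
  using ordering
  unfolding vertex_ordering_def strict_linear_order_on_def total_on_def trans_def irrefl_def
  by blast+

lemma ordering_asym: "(x, y) \<in> \<sigma> \<Longrightarrow> (y, x) \<notin> \<sigma>"
  using ordering_trans ordering_irrefl by blast

text \<open>With two classes, ``same class'' is ``agree on membership in \<open>A\<close>''.\<close>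

lemma consistent_triple:
  assumes "r \<in> V" "s \<in> V" "t \<in> V" "(r, s) \<in> \<sigma>" "(s, t) \<in> \<sigma>" "E r t"
  shows "(r \<in> A \<longleftrightarrow> s \<in> A) \<Longrightarrow> E s t"
    and "(s \<in> A \<longleftrightarrow> t \<in> A) \<Longrightarrow> E r s"
proof -
  have "A \<union> B = V" "A \<inter> B = {} \<or> A = B"
    using partition unfolding partition_on_def disjoint_def by auto
  then have "(\<exists>X\<in>{A, B}. x \<in> X \<and> y \<in> X) \<longleftrightarrow> (x \<in> A \<longleftrightarrow> y \<in> A)" if "x \<in> V" "y \<in> V" for x y
    using that by auto
  with assms consistent show "(r \<in> A \<longleftrightarrow> s \<in> A) \<Longrightarrow> E s t" "(s \<in> A \<longleftrightarrow> t \<in> A) \<Longrightarrow> E r s"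
    unfolding strongly_consistent_def by meson+
qed

lemma neighbours_in_class_of_jumped_vertex:
  assumes acyclic: "acyclic_graph V E"
    and "E a b" "(a, s) \<in> \<sigma>" "(s, b) \<in> \<sigma>" "\<not> E a s" "\<not> E s b"
    and "E s w"
  shows "w \<in> A \<longleftrightarrow> s \<in> A"
proof -
  have V: "a \<in> V" "b \<in> V" "s \<in> V" "w \<in> V"
    using adjacent_in_V assms(2,7) by blast+
  have a_class: "\<not> (a \<in> A \<longleftrightarrow> s \<in> A)" and b_class: "\<not> (b \<in> A \<longleftrightarrow> s \<in> A)"
    using consistent_triple[OF V(1,3,2) assms(3,4,2)] assms(5,6) by blast+
  have "w \<noteq> a" "w \<noteq> b"
    using assms(5-7) adjacent_sym by blast+
  then consider "(w, a) \<in> \<sigma>" | "(b, w) \<in> \<sigma>" | "(a, w) \<in> \<sigma>" "(w, b) \<in> \<sigma>"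
    using ordering_total V by blast
  then show ?thesis
  proof cases
    case 1
    show ?thesis
      using consistent_triple(1)[OF V(4,1,3) 1 assms(3) adjacent_sym[OF assms(7)]] assms(5) a_class
      by blast
  next
    case 2
    show ?thesis
      using consistent_triple(2)[OF V(3,2,4) assms(4) 2 assms(7)] assms(6) b_class adjacent_sym
      by blast
  next
    case 3
    show ?thesis
    proof (rule ccontr)
      assume "\<not> ?thesis"
      then have "E a w" "E w b"
        using consistent_triple[OF V(1,4,2) 3 assms(2)] a_class b_class by blast+
      then show False
        using acyclic_graph_acyclic[OF graph acyclic _ _ adjacent_sym[OF assms(2)]] by blast
    qed
  qed
qed

text \<open>Two such neighbours \<open>x < y\<close> on the same side of \<open>s\<close> would form a triangle with \<open>s\<close>.\<close>

lemma degree_le_2_if_neighbours_in_class: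
  assumes acyclic: "acyclic_graph V E"
    and same_class: "\<And>w. E s w \<Longrightarrow> w \<in> A \<longleftrightarrow> s \<in> A"
  shows "degree V E s \<le> 2"
proof -
  have one_per_side: "x = y"
    if "E s x" "E s y" and side: "(x, s) \<in> \<sigma> \<and> (y, s) \<in> \<sigma> \<or> (s, x) \<in> \<sigma> \<and> (s, y) \<in> \<sigma>" for x y
  proof (rule ccontr)
    assume "x \<noteq> y"
    have V: "x \<in> V" "y \<in> V" "s \<in> V"
      using adjacent_in_V that(1,2) by blast+
    have triangle: "E x y \<Longrightarrow> False" if "E s x" "E s y" for x y
      using acyclic_graph_acyclic[OF graph acyclic _ adjacent_sym[OF that(2)] that(1)] .
    have "E x y \<or> E y x"
      using ordering_total[OF V(1,2) \<open>x \<noteq> y\<close>] side same_class that(1,2) adjacent_sym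
        consistent_triple[OF V(1,2,3)] consistent_triple[OF V(2,1,3)]
        consistent_triple[OF V(3,1,2)] consistent_triple[OF V(3,2,1)]
      by metis
    then show False
      using triangle that(1,2) adjacent_sym by blast
  qed
  let ?below = "{u \<in> V. E s u \<and> (u, s) \<in> \<sigma>}" and ?above = "{u \<in> V. E s u \<and> (s, u) \<in> \<sigma>}"
  have "finite V"
    using graph unfolding graph_def by blast
  then have "card ?below \<le> 1" "card ?above \<le> 1"
    using one_per_side by (auto simp: card_le_Suc0_iff_eq)
  moreover have "{u \<in> V. E s u} = ?below \<union> ?above"
    using ordering_total not_adjacent_self adjacent_in_V by blast
  then have "degree V E s \<le> card ?below + card ?above"
    unfolding degree_def by (simp add: card_Un_le)
  ultimately show ?thesis by linarith
qed

end

theorem corollaryA10: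
  fixes V :: "'a set" and E :: "'a \<Rightarrow> 'a \<Rightarrow> bool" and \<sigma> :: "'a rel"
    and V0 V1 :: "'a set" and v1 v2 v3 :: 'a and p :: "'a list"
  assumes "tree V E"
    and "pthin V E = 2"
    and "vertex_ordering V \<sigma>"
    and "partition_on V {V0, V1}"
    and "strongly_consistent V E \<sigma> {V0, V1}"
    and "v1 \<in> V" "v2 \<in> V" "v3 \<in> V"
    and "(v1, v2) \<in> \<sigma>" "(v2, v3) \<in> \<sigma>"
    and "degree V E v2 = 3"
    and "simple_path V E p" "hd p = v1" "last p = v3"
  shows "v2 \<in> set p \<or> (\<exists>u \<in> set p. E u v2)"
proof (rule ccontr)
  assume avoids: "\<not> ?thesis"
  interpret strongly_consistent_2_layout V E \<sigma> V0 V1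
    using assms(1,3-5) unfolding tree_def by unfold_locales auto
  have acyclic: "acyclic_graph V E"
    using assms(1) unfolding tree_def by blast
  have path: "p \<noteq> []" "set p \<subseteq> V" "\<And>i. Suc i < length p \<Longrightarrow> E (p ! i) (p ! Suc i)"
    using assms(12) unfolding simple_path_def by auto
  obtain i where i: "Suc i < length p" "(p ! i, v2) \<in> \<sigma>" "(p ! Suc i, v2) \<notin> \<sigma>"
    using list_crossing_step[of p "\<lambda>x. (x, v2) \<in> \<sigma>"] path(1) assms(9,10,13,14) ordering_asym
    by auto
  have on_path: "p ! i \<in> set p" "p ! Suc i \<in> set p"
    using i(1) by auto
  then have "(v2, p ! Suc i) \<in> \<sigma>"
    using i(3) ordering_total assms(7) path(2) avoids by blast
  then have "w \<in> V0 \<longleftrightarrow> v2 \<in> V0" if "E v2 w" for w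
    using neighbours_in_class_of_jumped_vertex[OF acyclic path(3)[OF i(1)] i(2) _ _ _ that]
      on_path avoids adjacent_sym by blast
  then have "degree V E v2 \<le> 2"
    using degree_le_2_if_neighbours_in_class[OF acyclic] by blast
  with assms(11) show False by simp
qed

end
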